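(* Let $G$ be a long graph. Then $i(G)=\gamma(G)$.
   Context: All graphs are finite and simple. A graph $G$ is long if the set $\{x\in V(G):\deg(x)>2\}$ is independent. A set $A\subseteq V(G)$ is dominating if every vertex not in $A$ has a neighbor in $A$; $\gamma(G)$ is the minimum size of a dominating set and $i(G)$ the minimum size of an independent dominating set. *)

theory Defs
  imports Main
begin

definition simple_graph :: "'a set \<Rightarrow> ('a \<Rightarrow> 'a \<Rightarrow> bool) \<Rightarrow> bool" where
  "simple_graph V E \<longleftrightarrow> finite V \<and> (\<forall>x y. E x y \<longrightarrow> x \<in> V \<and> y \<in> V)
     \<and> (\<forall>x. \<not> E x x) \<and> (\<forall>x y. E x y \<longrightarrow> E y x)"

definition neighbors :: "'a set \<Rightarrow> ('a \<Rightarrow> 'a \<Rightarrow> bool) \<Rightarrow> 'a \<Rightarrow> 'a set" where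
  "neighbors V E x = {y \<in> V. E x y}"

definition degree :: "'a set \<Rightarrow> ('a \<Rightarrow> 'a \<Rightarrow> bool) \<Rightarrow> 'a \<Rightarrow> nat" where
  "degree V E x = card (neighbors V E x)"

definition independent :: "'a set \<Rightarrow> ('a \<Rightarrow> 'a \<Rightarrow> bool) \<Rightarrow> 'a set \<Rightarrow> bool" where
  "independent V E A \<longleftrightarrow> A \<subseteq> V \<and> (\<forall>x\<in>A. \<forall>y\<in>A. \<not> E x y)"

definition long_graph :: "'a set \<Rightarrow> ('a \<Rightarrow> 'a \<Rightarrow> bool) \<Rightarrow> bool" where
  "long_graph V E \<longleftrightarrow> independent V E {x \<in> V. degree V E x > 2}"

definition dominating :: "'a set \<Rightarrow> ('a \<Rightarrow> 'a \<Rightarrow> bool) \<Rightarrow> 'a set \<Rightarrow> bool" where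
  "dominating V E A \<longleftrightarrow> A \<subseteq> V \<and> (\<forall>x\<in>V - A. \<exists>y\<in>A. E x y)"

definition domination_number :: "'a set \<Rightarrow> ('a \<Rightarrow> 'a \<Rightarrow> bool) \<Rightarrow> nat" where
  "domination_number V E = (LEAST k. \<exists>A. dominating V E A \<and> card A = k)"

definition independent_domination_number :: "'a set \<Rightarrow> ('a \<Rightarrow> 'a \<Rightarrow> bool) \<Rightarrow> nat" where
  "independent_domination_number V E =
     (LEAST k. \<exists>A. dominating V E A \<and> independent V E A \<and> card A = k)"

end

theory Submission
  imports Defs
begin

text \<open>Among the minimum dominating sets choose one, D, with as few vertices as possible that have a
  neighbour inside D. If two vertices x, y of D were adjacent, one of them, say x, has degree at most 2
  because G is long. Minimality of D gives x a private neighbour z outside D, so the neighbours of x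
  are exactly y and z, and replacing x by z yields a minimum dominating set with fewer such vertices.\<close>

definition non_isolated :: "('a \<Rightarrow> 'a \<Rightarrow> bool) \<Rightarrow> 'a set \<Rightarrow> 'a set" where
  "non_isolated E D = {v \<in> D. \<exists>w\<in>D. E v w}"

lemma dominating_refl: "dominating V E V"
  unfolding dominating_def by auto

lemma domination_number_le: "dominating V E A \<Longrightarrow> domination_number V E \<le> card A"
  unfolding domination_number_def by (rule Least_le) blast

lemma domination_number_attained: "\<exists>A. dominating V E A \<and> card A = domination_number V E"
  unfolding domination_number_def by (rule LeastI_ex) (use dominating_refl in blast)

lemma independent_domination_number_eq_domination_number:
  assumes "dominating V E A" "independent V E A" "card A = domination_number V E"
  shows "independent_domination_number V E = domination_number V E"
proof (rule antisym)
  show "independent_domination_number V E \<le> domination_number V E"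
    unfolding independent_domination_number_def by (rule Least_le) (use assms in blast)
  have "\<exists>B. dominating V E B \<and> independent V E B \<and> card B = independent_domination_number V E"
    unfolding independent_domination_number_def by (rule LeastI_ex) (use assms in blast)
  then show "domination_number V E \<le> independent_domination_number V E"
    using domination_number_le by metis
qed

lemma minimum_dominating_private_neighbor:
  assumes G: "simple_graph V E" and D: "dominating V E D"
    and min: "\<And>B. dominating V E B \<Longrightarrow> card D \<le> card B"
    and xy: "x \<in> D" "y \<in> D" "E x y"
  obtains z where "z \<in> V - D" "E z x" "\<And>u. u \<in> D - {x} \<Longrightarrow> \<not> E z u"
proof -
  have finD: "finite D"
    using G D finite_subset unfolding simple_graph_def dominating_def by blast
  have "card (D - {x}) < card D"
    using card_Diff1_less[OF finD xy(1)] .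
  then have "\<not> dominating V E (D - {x})"
    using min by fastforce
  then obtain z where z: "z \<in> V" "z \<notin> D - {x}" and undominated: "\<And>u. u \<in> D - {x} \<Longrightarrow> \<not> E z u"
    using D unfolding dominating_def by auto
  have "z \<noteq> x"
    using undominated[of y] xy G unfolding simple_graph_def by auto
  with z have "z \<in> V - D" by auto
  moreover obtain u where "u \<in> D" "E z u"
    using D \<open>z \<in> V - D\<close> unfolding dominating_def by auto
  moreover from calculation have "u = x"
    using undominated by auto
  ultimately show thesis
    using that undominated by blast
qed

lemma neighbors_eq_if_degree_le_2:
  assumes "finite V" "degree V E x \<le> 2" "y \<noteq> z" "{y, z} \<subseteq> neighbors V E x"
  shows "neighbors V E x = {y, z}"
proof -
  have fin: "finite (neighbors V E x)"
    using assms(1) unfolding neighbors_def by auto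
  have "card (neighbors V E x) \<le> card {y, z}"
    using assms(2,3) unfolding degree_def by simp
  then show ?thesis
    using card_seteq[OF fin assms(4)] by simp
qed

lemma dominating_exchange:
  assumes G: "simple_graph V E" and D: "dominating V E D"
    and x: "x \<in> D" and z: "E x z" and nbrs: "neighbors V E x \<subseteq> insert z D"
  shows "dominating V E (insert z (D - {x}))"
  unfolding dominating_def
proof (intro conjI ballI)
  have sym: "\<And>a b. E a b \<Longrightarrow> E b a" and inV: "\<And>a b. E a b \<Longrightarrow> a \<in> V \<and> b \<in> V"
    using G unfolding simple_graph_def by auto
  show "insert z (D - {x}) \<subseteq> V"
    using D z inV unfolding dominating_def by auto
  fix w assume w: "w \<in> V - insert z (D - {x})"
  show "\<exists>u\<in>insert z (D - {x}). E w u"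
  proof (cases "w = x")
    case True
    then show ?thesis using z by auto
  next
    case False
    with w obtain u where u: "u \<in> D" "E w u"
      using D unfolding dominating_def by auto
    have "u \<noteq> x"
    proof
      assume "u = x"
      then have "w \<in> neighbors V E x"
        using u w sym unfolding neighbors_def by auto
      with nbrs w False show False by auto
    qed
    with u show ?thesis by auto
  qed
qed

lemma card_non_isolated_exchange_less:
  assumes G: "simple_graph V E" and finD: "finite D"
    and xy: "x \<in> D" "y \<in> D" "E x y"
    and excl: "\<And>u. u \<in> D - {x} \<Longrightarrow> \<not> E z u"
  shows "card (non_isolated E (insert z (D - {x}))) < card (non_isolated E D)"
proof -
  have irr: "\<And>a. \<not> E a a" and sym: "\<And>a b. E a b \<Longrightarrow> E b a"
    using G unfolding simple_graph_def by auto
  have "non_isolated E (insert z (D - {x})) \<subseteq> non_isolated E D - {x}"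
  proof
    fix v assume "v \<in> non_isolated E (insert z (D - {x}))"
    then obtain w where vw: "v \<in> insert z (D - {x})" "w \<in> insert z (D - {x})" "E v w"
      unfolding non_isolated_def by auto
    have "v \<in> D - {x}" "w \<in> D - {x}"
      using vw excl irr sym by (metis insertE)+
    then show "v \<in> non_isolated E D - {x}"
      using vw unfolding non_isolated_def by auto
  qed
  then have "card (non_isolated E (insert z (D - {x}))) \<le> card (non_isolated E D - {x})"
    using finD by (intro card_mono) (auto simp: non_isolated_def)
  also have "\<dots> < card (non_isolated E D)"
    using finD xy by (intro card_Diff1_less) (auto simp: non_isolated_def)
  finally show ?thesis .
qed

lemma long_graph_independent_minimum_dominating:
  assumes G: "simple_graph V E" and long: "long_graph V E"
  obtains D where "dominating V E D" "independent V E D" "card D = domination_number V E"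
proof -
  let ?minimum = "\<lambda>A. dominating V E A \<and> card A = domination_number V E"
  obtain D where D: "?minimum D"
    and least: "\<And>B. ?minimum B \<Longrightarrow> card (non_isolated E D) \<le> card (non_isolated E B)"
    using ex_has_least_nat[of ?minimum _ "\<lambda>A. card (non_isolated E A)"]
      domination_number_attained by metis
  have DV: "D \<subseteq> V" and finD: "finite D"
    using D G finite_subset unfolding dominating_def simple_graph_def by auto
  have min: "\<And>B. dominating V E B \<Longrightarrow> card D \<le> card B"
    using D domination_number_le by auto
  have no_edge: False if xy: "x \<in> D" "y \<in> D" "E x y" "degree V E x \<le> 2" for x y
  proof -
    obtain z where z: "z \<in> V - D" "E z x" and excl: "\<And>u. u \<in> D - {x} \<Longrightarrow> \<not> E z u"
      using minimum_dominating_private_neighbor[OF G _ min xy(1-3)] D by blast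
    have "E x y" "E x z" "y \<noteq> z"
      using xy z G unfolding simple_graph_def by auto
    then have "neighbors V E x = {y, z}"
      using neighbors_eq_if_degree_le_2[OF _ xy(4)] G DV xy z
      unfolding simple_graph_def neighbors_def by auto
    moreover have "card (insert z (D - {x})) = card D"
      using finD xy(1) z by (simp add: card_Suc_Diff1 del: card_Diff_insert)
    ultimately have "?minimum (insert z (D - {x}))"
      using dominating_exchange[OF G _ xy(1) \<open>E x z\<close>] D xy z by auto
    moreover have "card (non_isolated E (insert z (D - {x}))) < card (non_isolated E D)"
      using card_non_isolated_exchange_less[OF G finD xy(1-3) excl] .
    ultimately show False
      using least by fastforce
  qed
  have "independent V E D"
    unfolding independent_def
  proof (intro conjI ballI notI)
    fix x y assume xy: "x \<in> D" "y \<in> D" "E x y"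
    then have "degree V E x \<le> 2 \<or> degree V E y \<le> 2"
      using long DV unfolding long_graph_def independent_def by fastforce
    then show False
      using no_edge xy G unfolding simple_graph_def by blast
  qed (rule DV)
  with D that show thesis by blast
qed

theorem theorem5p12:
  fixes V :: "'a set" and E :: "'a \<Rightarrow> 'a \<Rightarrow> bool"
  assumes "simple_graph V E" and "long_graph V E"
  shows "independent_domination_number V E = domination_number V E"
proof -
  obtain D where "dominating V E D" "independent V E D" "card D = domination_number V E"
    using long_graph_independent_minimum_dominating[OF assms] .
  then show ?thesis
    by (rule independent_domination_number_eq_domination_number)
qed

end
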